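(* Let $\mathbb{F}$ be a finite field with $q$ elements, let $T,n,r$ be positive integers, and let $X$ be a uniformly random matrix in $\mathbb{F}^{T\times n}$. If $r^n\cdot q^{\binom{r+T}{r}-n}\ge1$, then $$\mathbb{E}[\operatorname{rank}(X^r)]\ge n\left(1-\frac{\ln r}{\ln q}\right)-\frac{1}{\ln q}.$$
   Context: For $X\in\mathbb{F}^{T\times n}$, $X^r\in\mathbb{F}^{\binom{r+T}{r}\times n}$ is the matrix whose rows are all coordinatewise products of at most $r$ rows of $X$, products with repeated rows included (one row for each multiset of at most $r$ row indices, the empty product being the all-ones row); i.e., the matrix of all monomials of total degree at most $r$ in the rows of $X$. *)

theory Defs
  imports "Jordan_Normal_Form.DL_Rank" "HOL-Library.Multiset" "HOL-Library.Cardinality"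
begin

text \<open>Index set of the rows of X^r: multisets of at most r row indices of X (rows 0..<T).\<close>
definition monomial_idx :: "nat \<Rightarrow> nat \<Rightarrow> nat multiset set" where
  "monomial_idx T r = {M. set_mset M \<subseteq> {0..<T} \<and> size M \<le> r}"

text \<open>An (arbitrary) enumeration of those multisets, each exactly once; the rank does not
  depend on the order of the rows.\<close>
definition monomial_list :: "nat \<Rightarrow> nat \<Rightarrow> nat multiset list" where
  "monomial_list T r = (SOME xs. distinct xs \<and> set xs = monomial_idx T r)"

text \<open>X^r: one row per multiset M, entry in column j = product over M (with multiplicity)
  of the entries X(i,j); the empty multiset gives the all-ones row.\<close>
definition mono_power :: "'a::comm_ring_1 mat \<Rightarrow> nat \<Rightarrow> 'a mat" where
  "mono_power X r = mat_of_rows (dim_col X)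
     (map (\<lambda>M. vec (dim_col X) (\<lambda>j. \<Prod>i\<in>#M. X $$ (i, j))) (monomial_list (dim_row X) r))"

definition mat_rank :: "'a::field mat \<Rightarrow> nat" where
  "mat_rank A = vec_space.rank (dim_row A) A"

end

(*
  Let N = binom(r+T, r) be the number of rows of X^r and q = |F|. A vector a in F^N is the coefficient
  vector of a polynomial f_a of degree at most r in T variables, and a lies in the left kernel K(X) of
  X^r exactly when f_a vanishes at every column of X. Counting the pairs (X, a) with this property,
  the sum of |K(X)| over all X equals the sum over a of Z(a)^n, where Z(a) is the number of zeros of
  f_a in F^T. As Z(0) = q^T and Z(a) <= r q^(T-1) for a <> 0 (Schwartz-Zippel), the mean of |K(X)| is at
  most 1 + c with c = r^n q^(N-n) >= 1. Finally |K(X)| >= q^(N - rank X^r), and the tangent bound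
  ln x <= x/c + ln c - 1 averages to E[N - rank X^r] ln q <= (1 + c)/c + ln c - 1 <= 1 + ln c.
*)
theory Submission
  imports Defs "HOL-Computational_Algebra.Polynomial"
begin

lemma finite_lists_length:
  "finite {xs :: 'a::finite list. length xs = n}"
  using finite_lists_length_eq[of "UNIV :: 'a set" n] by simp

lemma card_lists_length:
  "card {xs :: 'a::finite list. length xs = n} = CARD('a) ^ n"
  using card_lists_length_eq[of "UNIV :: 'a set" n] by simp

lemma card_lists_Suc_eq_sum_snoc:
  fixes P :: "'a::finite list \<Rightarrow> bool"
  shows "card {xs. length xs = Suc n \<and> P xs} = (\<Sum>ys | length ys = n. card {t. P (ys @ [t])})"
proof -
  have "{xs. length xs = Suc n \<and> P xs} =
      (\<lambda>(ys, t). ys @ [t]) ` (SIGMA ys:{ys. length ys = n}. {t. P (ys @ [t])})"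
  proof (intro equalityI subsetI)
    fix xs assume xs: "xs \<in> {xs. length xs = Suc n \<and> P xs}"
    then have "xs \<noteq> []" by auto
    then show "xs \<in> (\<lambda>(ys, t). ys @ [t]) ` (SIGMA ys:{ys. length ys = n}. {t. P (ys @ [t])})"
      using xs by (intro image_eqI[of _ _ "(butlast xs, last xs)"]) auto
  qed auto
  moreover have "inj_on (\<lambda>(ys, t). ys @ [t]) (SIGMA ys:{ys. length ys = n}. {t. P (ys @ [t])})"
    by (auto simp: inj_on_def)
  ultimately show ?thesis
    by (simp add: card_image card_SigmaI finite_lists_length)
qed

lemma bij_betw_list_of_vec: "bij_betw list_of_vec (carrier_vec n) {xs. length xs = n}"
  by (rule bij_betw_byWitness[where f' = vec_of_list]) (auto simp: vec_list list_vec intro: carrier_vecI)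

lemma card_carrier_vec: "card (carrier_vec n :: 'a::finite vec set) = CARD('a) ^ n"
proof -
  have "card (carrier_vec n :: 'a vec set) = card {xs :: 'a list. length xs = n}"
    by (rule bij_betw_same_card[OF bij_betw_list_of_vec])
  then show ?thesis by (simp add: card_lists_length)
qed

lemma finite_carrier_vec [simp]: "finite (carrier_vec n :: 'a::finite vec set)"
  using finite_lists_length by (rule bij_betw_finite[OF bij_betw_list_of_vec, THEN iffD2])

lemma card_carrier_vec_list_of_vec:
  "card {x \<in> carrier_vec T. P (list_of_vec x)} = card {xs. length xs = T \<and> P xs}"
proof -
  have "list_of_vec ` {x \<in> carrier_vec T. P (list_of_vec x)} = {xs. length xs = T \<and> P xs}"
  proof (intro equalityI subsetI)
    fix xs assume "xs \<in> {xs. length xs = T \<and> P xs}"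
    then show "xs \<in> list_of_vec ` {x \<in> carrier_vec T. P (list_of_vec x)}"
      by (intro image_eqI[of _ _ "vec_of_list xs"]) (auto simp: list_vec intro: carrier_vecI)
  qed auto
  moreover have "inj_on list_of_vec {x \<in> carrier_vec T. P (list_of_vec x)}"
    using bij_betw_imp_inj_on[OF bij_betw_list_of_vec] by (rule inj_on_subset) auto
  ultimately show ?thesis by (metis card_image)
qed

lemma card_carrier_mat_cols:
  fixes P :: "'a vec \<Rightarrow> bool"
  shows "card {X \<in> carrier_mat T n. \<forall>j<n. P (col X j)} = card {x \<in> carrier_vec T. P x} ^ n"
proof -
  let ?A = "{X \<in> carrier_mat T n. \<forall>j<n. P (col X j)}"
  let ?B = "{0..<n} \<rightarrow>\<^sub>E {x \<in> carrier_vec T. P x}"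
  let ?mat = "\<lambda>f. mat T n (\<lambda>(i, j). f j $ i)"
  have col_mat: "col (?mat f) j = f j" if "f j \<in> carrier_vec T" "j < n" for f j
    using that by (auto intro!: eq_vecI)
  have "bij_betw (\<lambda>X. restrict (col X) {0..<n}) ?A ?B"
  proof (rule bij_betw_byWitness[where f' = ?mat])
    show "\<forall>X\<in>?A. ?mat (restrict (col X) {0..<n}) = X"
      by (auto intro!: eq_matI)
    show "\<forall>f\<in>?B. restrict (col (?mat f)) {0..<n} = f"
      using col_mat by (auto simp: PiE_def extensional_def Pi_def restrict_def fun_eq_iff)
    show "(\<lambda>X. restrict (col X) {0..<n}) ` ?A \<subseteq> ?B" by auto
    show "?mat ` ?B \<subseteq> ?A"
    proof
      fix Y assume "Y \<in> ?mat ` ?B"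
      then obtain f where f: "f \<in> ?B" and Y: "Y = ?mat f" by blast
      have "P (col Y j)" if "j < n" for j
      proof -
        have "f j \<in> carrier_vec T" "P (f j)" using PiE_mem[OF f, of j] that by auto
        then show ?thesis using col_mat[of f j] that Y by simp
      qed
      then show "Y \<in> ?A" using Y by auto
    qed
  qed
  then show ?thesis by (simp add: bij_betw_same_card card_PiE)
qed

lemma card_carrier_mat: "card (carrier_mat T n :: 'a::finite mat set) = CARD('a) ^ (T * n)"
  using card_carrier_mat_cols[where P = "\<lambda>_ :: 'a vec. True" and T = T and n = n]
  by (simp add: card_carrier_vec power_mult)

lemma finite_carrier_mat: "finite (carrier_mat T n :: 'a::finite mat set)"
  using card_carrier_mat[of T n, where 'a = 'a] by (intro card_ge_0_finite) simp

section \<open>The Schwartz--Zippel lemma\<close>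

definition eval_monomial :: "nat multiset \<Rightarrow> 'a::comm_monoid_mult list \<Rightarrow> 'a" where
  "eval_monomial M xs = (\<Prod>i\<in>#M. xs ! i)"

lemma mset_eq_filter_less_plus_replicate:
  assumes "set_mset M \<subseteq> {0..<Suc T}"
  shows "M = filter_mset (\<lambda>i. i < T) M + replicate_mset (count M T) T"
proof -
  have "filter_mset (\<lambda>i. \<not> i < T) M = replicate_mset (count M T) T"
    unfolding multiset_eq_iff
  proof
    fix x show "count (filter_mset (\<lambda>i. \<not> i < T) M) x = count (replicate_mset (count M T) T) x"
      using assms by (cases "x = T") (auto simp: count_eq_zero_iff)
  qed
  then show ?thesis by (metis multiset_partition)
qed

lemma eval_monomial_snoc:
  assumes "set_mset M \<subseteq> {0..<Suc T}" and "length ys = T"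
  shows "eval_monomial M (ys @ [t]) = eval_monomial (filter_mset (\<lambda>i. i < T) M) ys * t ^ count M T"
proof -
  let ?M' = "filter_mset (\<lambda>i. i < T) M"
  have "(\<Prod>i\<in>#?M'. (ys @ [t]) ! i) = (\<Prod>i\<in>#?M'. ys ! i)"
    using assms(2) by (intro arg_cong[where f = prod_mset] image_mset_cong) (simp add: nth_append)
  moreover have "(\<Prod>i\<in>#replicate_mset (count M T) T. (ys @ [t]) ! i) = t ^ count M T"
    using nth_append_length[of ys t] assms(2) by simp
  ultimately show ?thesis
    unfolding eval_monomial_def
    by (subst mset_eq_filter_less_plus_replicate[OF assms(1)]) simp
qed

lemma card_roots_sum_powers:
  fixes c :: "'i \<Rightarrow> 'a::idom"
  assumes "finite I" and "\<And>i. i \<in> I \<Longrightarrow> c i \<noteq> 0 \<Longrightarrow> e i \<le> k"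
    and "(\<Sum>i | i \<in> I \<and> e i = k. c i) \<noteq> 0"
  shows "card {t. (\<Sum>i\<in>I. c i * t ^ e i) = 0} \<le> k"
proof -
  define p where "p = (\<Sum>i\<in>I. monom (c i) (e i))"
  have coeff_p: "coeff p j = (\<Sum>i | i \<in> I \<and> e i = j. c i)" for j
    unfolding p_def coeff_sum coeff_monom using assms(1) by (simp add: sum.If_cases Int_def conj_commute)
  then have "p \<noteq> 0" using assms(3) by auto
  moreover have "degree p \<le> k"
  proof (rule degree_le, intro allI impI)
    fix j assume "k < j"
    then show "coeff p j = 0" unfolding coeff_p using assms(2) by (force intro: sum.neutral)
  qed
  moreover have "poly p t = (\<Sum>i\<in>I. c i * t ^ e i)" for t
    unfolding p_def poly_sum poly_monom ..
  ultimately show ?thesis using card_poly_roots_bound[of p] by simp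
qed

lemma card_roots_last_variable:
  fixes c :: "'i \<Rightarrow> 'a::idom"
  assumes "finite I" and "\<And>i. i \<in> I \<Longrightarrow> set_mset (g i) \<subseteq> {0..<Suc T}"
    and "\<And>i. i \<in> I \<Longrightarrow> c i \<noteq> 0 \<Longrightarrow> count (g i) T \<le> k"
    and "length ys = T"
    and "(\<Sum>i | i \<in> I \<and> count (g i) T = k. c i * eval_monomial (filter_mset (\<lambda>j. j < T) (g i)) ys) \<noteq> 0"
  shows "card {t. (\<Sum>i\<in>I. c i * eval_monomial (g i) (ys @ [t])) = 0} \<le> k"
proof -
  have "(\<Sum>i\<in>I. c i * eval_monomial (g i) (ys @ [t])) =
      (\<Sum>i\<in>I. (c i * eval_monomial (filter_mset (\<lambda>j. j < T) (g i)) ys) * t ^ count (g i) T)" for t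
    using eval_monomial_snoc[OF assms(2) assms(4)] by (simp add: mult.assoc)
  moreover have "card {t. (\<Sum>i\<in>I. (c i * eval_monomial (filter_mset (\<lambda>j. j < T) (g i)) ys) * t ^ count (g i) T) = 0} \<le> k"
    using assms(1,3,5) by (intro card_roots_sum_powers) auto
  ultimately show ?thesis by simp
qed

lemma inj_on_filter_mset_less:
  assumes "inj_on g I" and "\<And>i. i \<in> I \<Longrightarrow> set_mset (g i) \<subseteq> {0..<Suc T}"
    and "\<And>i. i \<in> I \<Longrightarrow> count (g i) T = k"
  shows "inj_on (\<lambda>i. filter_mset (\<lambda>j. j < T) (g i)) I"
proof (rule inj_onI)
  fix i j assume ij: "i \<in> I" "j \<in> I"
    and eq: "filter_mset (\<lambda>j. j < T) (g i) = filter_mset (\<lambda>j. j < T) (g j)"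
  have "g i = filter_mset (\<lambda>j. j < T) (g i) + replicate_mset k T"
    using mset_eq_filter_less_plus_replicate[OF assms(2)[OF ij(1)]] unfolding assms(3)[OF ij(1)] .
  also have "\<dots> = filter_mset (\<lambda>j. j < T) (g j) + replicate_mset k T"
    unfolding eq ..
  also have "\<dots> = g j"
    using mset_eq_filter_less_plus_replicate[OF assms(2)[OF ij(2)]] unfolding assms(3)[OF ij(2)] by (rule sym)
  finally show "i = j" using inj_onD[OF assms(1)] ij by blast
qed

lemma card_lists_Suc_le_of_fibres:
  fixes P B :: "'a::finite list \<Rightarrow> bool"
  assumes fibre: "\<And>ys. length ys = n \<Longrightarrow> \<not> B ys \<Longrightarrow> card {t. P (ys @ [t])} \<le> k"
    and bad: "card {ys. length ys = n \<and> B ys} * CARD('a) \<le> (d - k) * CARD('a) ^ n"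
    and "k \<le> d"
  shows "card {xs. length xs = Suc n \<and> P xs} * CARD('a) \<le> d * CARD('a) ^ Suc n"
proof -
  let ?q = "CARD('a)" and ?L = "{ys :: 'a list. length ys = n}"
  define Z where "Z = card {ys. length ys = n \<and> B ys}"
  have Z: "Z * ?q \<le> (d - k) * ?q ^ n" unfolding Z_def by (rule bad)
  have "card {t. P (ys @ [t])} \<le> (if B ys then ?q else 0) + k" if "length ys = n" for ys
  proof (cases "B ys")
    case True
    have "card {t. P (ys @ [t])} \<le> ?q" by (rule card_mono) auto
    then show ?thesis using True by simp
  qed (use fibre that in simp)
  then have "card {xs. length xs = Suc n \<and> P xs} \<le> (\<Sum>ys\<in>?L. (if B ys then ?q else 0) + k)"
    unfolding card_lists_Suc_eq_sum_snoc by (intro sum_mono) simp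
  also have "\<dots> = (\<Sum>ys\<in>{ys \<in> ?L. B ys}. ?q) + (\<Sum>ys\<in>?L. k)"
    by (simp only: sum.distrib sum.inter_filter[OF finite_lists_length])
  also have "\<dots> = ?q * Z + k * ?q ^ n"
    by (simp add: Z_def card_lists_length)
  finally have "card {xs. length xs = Suc n \<and> P xs} * ?q \<le> (?q * Z + k * ?q ^ n) * ?q"
    by (rule mult_right_mono) simp
  also have "\<dots> = ?q * (Z * ?q) + k * ?q ^ Suc n"
    by (simp add: algebra_simps)
  also have "\<dots> \<le> ?q * ((d - k) * ?q ^ n) + k * ?q ^ Suc n"
    using Z by simp
  also have "\<dots> = d * ?q ^ Suc n"
    using \<open>k \<le> d\<close> by (simp add: algebra_simps diff_mult_distrib)
  finally show ?thesis .
qed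

theorem schwartz_zippel:
  fixes c :: "'i \<Rightarrow> 'a::{finite,field}"
  assumes "finite I" and "inj_on g I"
    and "\<And>i. i \<in> I \<Longrightarrow> set_mset (g i) \<subseteq> {0..<T} \<and> size (g i) \<le> d"
    and "i\<^sub>0 \<in> I" and "c i\<^sub>0 \<noteq> 0"
  shows "card {xs. length xs = T \<and> (\<Sum>i\<in>I. c i * eval_monomial (g i) xs) = 0} * CARD('a)
           \<le> d * CARD('a) ^ T"
  using assms
proof (induction T arbitrary: I g c d i\<^sub>0)
  case 0
  then have "I = {i\<^sub>0}" and "g i\<^sub>0 = {#}"
    using inj_onD[OF "0.prems"(2)] by auto
  then show ?case using "0.prems"(5) by (simp add: eval_monomial_def)
next
  case (Suc T)
  define k where "k = Max {count (g i) T | i. i \<in> I \<and> c i \<noteq> 0}"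
  have count_le_k: "count (g i) T \<le> k" if "i \<in> I" "c i \<noteq> 0" for i
    unfolding k_def using Suc.prems(1) that by (intro Max_ge) auto
  obtain i\<^sub>1 where i\<^sub>1: "i\<^sub>1 \<in> I" "c i\<^sub>1 \<noteq> 0" "count (g i\<^sub>1) T = k"
  proof -
    have "k \<in> {count (g i) T | i. i \<in> I \<and> c i \<noteq> 0}"
      unfolding k_def using Suc.prems(1,4,5) by (intro Max_in) auto
    then show thesis using that by blast
  qed
  have "k \<le> d" using Suc.prems(3)[OF i\<^sub>1(1)] i\<^sub>1(3) count_le_size[of "g i\<^sub>1" T] by simp
  \<comment> \<open>The coefficient of the top power \<open>x\<^sub>T\<^sup>k\<close> is a polynomial in the first \<open>T\<close> variables.\<close>
  define J where "J = {i \<in> I. count (g i) T = k}"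
  define g' where "g' i = filter_mset (\<lambda>j. j < T) (g i)" for i
  define G where "G ys = (\<Sum>i\<in>J. c i * eval_monomial (g' i) ys)" for ys
  have IH: "card {ys. length ys = T \<and> G ys = 0} * CARD('a) \<le> (d - k) * CARD('a) ^ T"
    unfolding G_def
  proof (rule Suc.IH)
    show "finite J" using Suc.prems(1) unfolding J_def by simp
    show "inj_on g' J"
      unfolding g'_def[abs_def] using Suc.prems(3)
      by (intro inj_on_filter_mset_less[where k = k] inj_on_subset[OF Suc.prems(2)]) (auto simp: J_def)
    show "set_mset (g' i) \<subseteq> {0..<T} \<and> size (g' i) \<le> d - k" if "i \<in> J" for i
    proof
      show "set_mset (g' i) \<subseteq> {0..<T}" unfolding g'_def by auto
      have "g i = g' i + replicate_mset (count (g i) T) T"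
        unfolding g'_def using Suc.prems(3) that
        by (intro mset_eq_filter_less_plus_replicate) (auto simp: J_def)
      then have "size (g i) = size (g' i) + count (g i) T"
        by (metis size_replicate_mset size_union)
      then show "size (g' i) \<le> d - k" using Suc.prems(3)[of i] that by (auto simp: J_def)
    qed
    show "i\<^sub>1 \<in> J" "c i\<^sub>1 \<noteq> 0" using i\<^sub>1 by (auto simp: J_def)
  qed
  show ?case
  proof (rule card_lists_Suc_le_of_fibres[OF _ IH \<open>k \<le> d\<close>])
    fix ys :: "'a list" assume "length ys = T" and "\<not> G ys = 0"
    then show "card {t. (\<Sum>i\<in>I. c i * eval_monomial (g i) (ys @ [t])) = 0} \<le> k"
      using Suc.prems(1,3) count_le_k
      by (intro card_roots_last_variable) (auto simp: G_def J_def g'_def)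
  qed
qed

section \<open>Monomials of bounded degree\<close>

lemma filter_mset_less_plus_replicate_eq:
  fixes T r :: nat
  assumes "M \<in> multisets_of_size {0..T} r"
  shows "filter_mset (\<lambda>i. i < T) M + replicate_mset (r - size (filter_mset (\<lambda>i. i < T) M)) T = M"
proof -
  have M_split: "M = filter_mset (\<lambda>i. i < T) M + replicate_mset (count M T) T"
    using assms by (intro mset_eq_filter_less_plus_replicate) (auto simp: multisets_of_size_def)
  have "size M = size (filter_mset (\<lambda>i. i < T) M + replicate_mset (count M T) T)"
    using M_split by (rule arg_cong)
  then have "r - size (filter_mset (\<lambda>i. i < T) M) = count M T"
    using assms by (auto simp: multisets_of_size_def)
  then have "filter_mset (\<lambda>i. i < T) M + replicate_mset (r - size (filter_mset (\<lambda>i. i < T) M)) T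
      = filter_mset (\<lambda>i. i < T) M + replicate_mset (count M T) T"
    by simp
  also have "\<dots> = M" using M_split by (rule sym)
  finally show ?thesis .
qed

lemma bij_betw_monomial_idx_multisets_of_size:
  "bij_betw (\<lambda>M. M + replicate_mset (r - size M) T) (monomial_idx T r) (multisets_of_size {0..T} r)"
proof (rule bij_betw_byWitness[where f' = "filter_mset (\<lambda>i. i < T)"])
  show "\<forall>M\<in>monomial_idx T r. filter_mset (\<lambda>i. i < T) (M + replicate_mset (r - size M) T) = M"
  proof
    fix M assume "M \<in> monomial_idx T r"
    then have "filter_mset (\<lambda>i. i < T) M = M"
      by (auto simp: monomial_idx_def filter_mset_eq_conv)
    moreover have "filter_mset (\<lambda>i. i < T) (replicate_mset k T) = {#}" for k
      by simp
    ultimately show "filter_mset (\<lambda>i. i < T) (M + replicate_mset (r - size M) T) = M"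
      by simp
  qed
  show "\<forall>M\<in>multisets_of_size {0..T} r.
      filter_mset (\<lambda>i. i < T) M + replicate_mset (r - size (filter_mset (\<lambda>i. i < T) M)) T = M"
    using filter_mset_less_plus_replicate_eq by blast
  show "(\<lambda>M. M + replicate_mset (r - size M) T) ` monomial_idx T r \<subseteq> multisets_of_size {0..T} r"
    by (auto simp: monomial_idx_def multisets_of_size_def subset_iff split: if_splits)
  show "filter_mset (\<lambda>i. i < T) ` multisets_of_size {0..T} r \<subseteq> monomial_idx T r"
  proof (rule image_subsetI)
    fix M assume "M \<in> multisets_of_size {0..T} r"
    then have "size (filter_mset (\<lambda>i. i < T) M) \<le> r"
      using size_filter_mset_lesseq[of "\<lambda>i. i < T" M] by (simp add: multisets_of_size_def)
    then show "filter_mset (\<lambda>i. i < T) M \<in> monomial_idx T r"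
      by (auto simp: monomial_idx_def)
  qed
qed

lemma card_monomial_idx: "card (monomial_idx T r) = (r + T) choose r"
proof -
  \<comment> \<open>Stars and bars: pad a monomial of degree at most \<open>r\<close> with the extra index \<open>T\<close> up to degree \<open>r\<close>.\<close>
  have "card (monomial_idx T r) = card (multisets_of_size {0..T} r)"
    by (rule bij_betw_same_card[OF bij_betw_monomial_idx_multisets_of_size])
  also have "\<dots> = (r + T) choose r"
    by (simp add: card_multisets_of_size add.commute)
  finally show ?thesis .
qed

lemma finite_monomial_idx: "finite (monomial_idx T r)"
  using card_monomial_idx[of T r] by (intro card_ge_0_finite) simp

lemma distinct_monomial_list: "distinct (monomial_list T r)"
  and set_monomial_list: "set (monomial_list T r) = monomial_idx T r"
proof -
  have "\<exists>xs. distinct xs \<and> set xs = monomial_idx T r"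
    using finite_distinct_list[OF finite_monomial_idx] by blast
  then have "distinct (monomial_list T r) \<and> set (monomial_list T r) = monomial_idx T r"
    unfolding monomial_list_def by (rule someI_ex)
  then show "distinct (monomial_list T r)" "set (monomial_list T r) = monomial_idx T r"
    by auto
qed

lemma length_monomial_list: "length (monomial_list T r) = (r + T) choose r"
  using distinct_card[OF distinct_monomial_list] by (simp add: set_monomial_list card_monomial_idx)

lemma monomial_list_nth:
  assumes "k < length (monomial_list T r)"
  shows "set_mset (monomial_list T r ! k) \<subseteq> {0..<T}" and "size (monomial_list T r ! k) \<le> r"
  using nth_mem[OF assms] by (auto simp: set_monomial_list monomial_idx_def)

definition eval_coeff_poly :: "nat \<Rightarrow> nat \<Rightarrow> 'a::comm_ring_1 vec \<Rightarrow> 'a list \<Rightarrow> 'a" where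
  "eval_coeff_poly T r a xs =
     (\<Sum>k\<in>{0..<length (monomial_list T r)}. a $ k * eval_monomial (monomial_list T r ! k) xs)"

lemma card_zeros_eval_coeff_poly:
  fixes a :: "'a::{finite,field} vec"
  assumes "a \<in> carrier_vec ((r + T) choose r)" and "a \<noteq> 0\<^sub>v ((r + T) choose r)"
  shows "card {xs. length xs = T \<and> eval_coeff_poly T r a xs = 0} * CARD('a) \<le> r * CARD('a) ^ T"
proof -
  obtain k where k: "k < (r + T) choose r" "a $ k \<noteq> 0"
  proof -
    have "\<exists>k < (r + T) choose r. a $ k \<noteq> 0"
    proof (rule ccontr)
      assume "\<not> ?thesis"
      then have "a = 0\<^sub>v ((r + T) choose r)" using assms(1) by (intro eq_vecI) auto
      then show False using assms(2) by simp
    qed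
    then show thesis using that by blast
  qed
  show ?thesis
    unfolding eval_coeff_poly_def
  proof (rule schwartz_zippel)
    show "inj_on ((!) (monomial_list T r)) {0..<length (monomial_list T r)}"
      using distinct_monomial_list by (intro inj_on_nth) auto
    show "k \<in> {0..<length (monomial_list T r)}" using k(1) by (simp add: length_monomial_list)
  qed (use k(2) monomial_list_nth in auto)
qed

lemma mono_power_carrier_mat:
  "X \<in> carrier_mat T n \<Longrightarrow> mono_power X r \<in> carrier_mat ((r + T) choose r) n"
  by (simp add: mono_power_def mat_of_rows_def length_monomial_list)

lemma scalar_prod_col_mono_power:
  fixes X :: "'a::comm_ring_1 mat"
  assumes X: "X \<in> carrier_mat T n" and j: "j < n"
  shows "a \<bullet> col (mono_power X r) j = eval_coeff_poly T r a (list_of_vec (col X j))"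
  unfolding eval_coeff_poly_def scalar_prod_def
proof (rule sum.cong)
  show "{0..<dim_vec (col (mono_power X r) j)} = {0..<length (monomial_list T r)}"
    using X by (simp add: mono_power_def)
  fix k assume "k \<in> {0..<length (monomial_list T r)}"
  then have k: "k < length (monomial_list T r)" by simp
  have "(\<Prod>i\<in>#monomial_list T r ! k. X $$ (i, j)) = eval_monomial (monomial_list T r ! k) (list_of_vec (col X j))"
    unfolding eval_monomial_def using monomial_list_nth(1)[OF k] X j
    by (intro arg_cong[where f = prod_mset] image_mset_cong) (auto simp: list_of_vec_index)
  then show "a $ k * col (mono_power X r) j $ k = a $ k * eval_monomial (monomial_list T r ! k) (list_of_vec (col X j))"
    using X j k by (simp add: mono_power_def mat_of_rows_def)
qed

section \<open>Left kernels and rank\<close>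

definition left_kernel :: "'a::comm_ring_1 mat \<Rightarrow> 'a vec set" where
  "left_kernel A = {a \<in> carrier_vec (dim_row A). \<forall>j < dim_col A. a \<bullet> col A j = 0}"

lemma left_kernel_mono_power:
  assumes "X \<in> carrier_mat T n"
  shows "left_kernel (mono_power X r) =
    {a \<in> carrier_vec ((r + T) choose r). \<forall>j<n. eval_coeff_poly T r a (list_of_vec (col X j)) = 0}"
  using carrier_matD[OF mono_power_carrier_mat[OF assms]] scalar_prod_col_mono_power[OF assms]
  by (auto simp: left_kernel_def)

lemma (in vec_space) scalar_prod_eq_0_on_span:
  assumes "S \<subseteq> carrier_vec n" and "a \<in> carrier_vec n" and "\<forall>u\<in>S. a \<bullet> u = 0" and "v \<in> span S"
  shows "a \<bullet> v = 0"
proof -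
  let ?W = "{v \<in> carrier_vec n. a \<bullet> v = 0}"
  have "LinearCombinations.submodule class_ring ?W V"
    unfolding LinearCombinations.submodule_def using assms(2) module_axioms
    by (auto simp: module_vec_simps scalar_prod_add_distrib[of _ n])
  moreover have "S \<subseteq> ?W" using assms(1,3) by auto
  ultimately have "span S \<subseteq> ?W" using span_is_subset by blast
  then show ?thesis using assms(4) by auto
qed

lemma (in vec_space) exists_indpt_cols_spanning:
  assumes A: "A \<in> carrier_mat n nc"
  shows "\<exists>S \<subseteq> set (cols A). card S = rank A \<and> set (cols A) \<subseteq> span S"
proof -
  let ?C = "set (cols A)"
  have C: "?C \<subseteq> carrier_vec n" using A cols_dim by blast
  obtain S where S: "maximal S (\<lambda>U. U \<subseteq> ?C \<and> lin_indpt U)"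
    using maximal_exists[of "\<lambda>U. U \<subseteq> ?C \<and> lin_indpt U" "card ?C" "{}"]
    by (meson List.finite_set card_mono empty_iff empty_subsetI finite_lin_indpt2 rev_finite_subset)
  have SC: "S \<subseteq> ?C" "lin_indpt S" using S unfolding maximal_def by auto
  have "?C \<subseteq> span S"
  proof
    fix c assume c: "c \<in> ?C"
    show "c \<in> span S"
    proof (rule ccontr)
      assume nc: "c \<notin> span S"
      then have "c \<notin> S" using in_own_span[of S] SC C by auto
      then have "lin_indpt (S \<union> {c})" using lin_dep_iff_in_span[of S c] SC C c nc by auto
      then have "S \<union> {c} = S" using S c SC unfolding maximal_def by blast
      then show False using \<open>c \<notin> S\<close> by auto
    qed
  qed
  then show ?thesis using SC(1) rank_card_indpt[OF A S] by auto
qed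

lemma card_carrier_vec_le_annihilator:
  fixes S :: "'a::{finite,field} vec set"
  assumes "finite S" and "S \<subseteq> carrier_vec n"
  shows "CARD('a) ^ n \<le> CARD('a) ^ card S * card {a \<in> carrier_vec n. \<forall>u\<in>S. a \<bullet> u = 0}"
proof -
  define L where "L = {a \<in> carrier_vec n. \<forall>u\<in>S. a \<bullet> u = (0::'a)}"
  have "finite L" unfolding L_def by (rule finite_subset[OF _ finite_carrier_vec]) auto
  define \<psi> where "\<psi> a = restrict (\<lambda>u. a \<bullet> u) S" for a :: "'a vec"
  define rep where "rep y = (SOME b. b \<in> carrier_vec n \<and> \<psi> b = y)" for y
  \<comment> \<open>The fibres of \<open>\<psi>\<close> are translates of \<open>L\<close>, so \<open>h\<close> is injective.\<close>
  define h where "h a = (\<psi> a, a - rep (\<psi> a))" for a :: "'a vec"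
  have rep: "rep (\<psi> a) \<in> carrier_vec n" "\<psi> (rep (\<psi> a)) = \<psi> a" if "a \<in> carrier_vec n" for a
    using someI[of "\<lambda>b. b \<in> carrier_vec n \<and> \<psi> b = \<psi> a" a] that unfolding rep_def by auto
  have "inj_on h (carrier_vec n)"
  proof (rule inj_onI)
    fix a b :: "'a vec" assume a: "a \<in> carrier_vec n" and b: "b \<in> carrier_vec n" and "h a = h b"
    then have eq: "a - rep (\<psi> a) = b - rep (\<psi> a)" unfolding h_def by auto
    show "a = b"
    proof (rule eq_vecI)
      fix i assume "i < dim_vec b"
      then show "a $ i = b $ i" using arg_cong[OF eq, of "\<lambda>v. v $ i"] a b rep(1)[OF a] by simp
    qed (use a b in simp)
  qed
  moreover have "h ` carrier_vec n \<subseteq> (S \<rightarrow>\<^sub>E UNIV) \<times> L"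
  proof (rule image_subsetI)
    fix a :: "'a vec" assume a: "a \<in> carrier_vec n"
    have "(a - rep (\<psi> a)) \<bullet> u = 0" if u: "u \<in> S" for u
    proof -
      have "a \<bullet> u = rep (\<psi> a) \<bullet> u"
        using fun_cong[OF rep(2)[OF a], of u] u unfolding \<psi>_def by simp
      then show ?thesis
        using minus_scalar_prod_distrib[OF a rep(1)[OF a], of u] u assms(2) by auto
    qed
    then have "a - rep (\<psi> a) \<in> L" unfolding L_def using a rep(1)[OF a] by auto
    moreover have "\<psi> a \<in> S \<rightarrow>\<^sub>E UNIV" unfolding \<psi>_def by simp
    ultimately show "h a \<in> (S \<rightarrow>\<^sub>E UNIV) \<times> L" unfolding h_def by simp
  qed
  moreover have "finite ((S \<rightarrow>\<^sub>E (UNIV :: 'a set)) \<times> L)"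
    using assms(1) \<open>finite L\<close> by (simp add: finite_PiE)
  ultimately have "card (carrier_vec n :: 'a vec set) \<le> card ((S \<rightarrow>\<^sub>E (UNIV :: 'a set)) \<times> L)"
    by (rule card_inj_on_le)
  then show ?thesis
    using assms(1) unfolding L_def by (simp add: card_carrier_vec card_cartesian_product card_PiE)
qed

lemma card_annihilator_ge:
  fixes S :: "'a::{finite,field} vec set"
  assumes "finite S" and "S \<subseteq> carrier_vec n"
  shows "CARD('a) ^ (n - card S) \<le> card {a \<in> carrier_vec n. \<forall>u\<in>S. a \<bullet> u = 0}"
proof (cases "card S \<le> n")
  case True
  then have "CARD('a) ^ card S * CARD('a) ^ (n - card S)
      \<le> CARD('a) ^ card S * card {a \<in> carrier_vec n. \<forall>u\<in>S. a \<bullet> u = 0}"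
    using card_carrier_vec_le_annihilator[OF assms] by (simp flip: power_add)
  then show ?thesis by simp
next
  case False
  let ?L = "{a \<in> carrier_vec n. \<forall>u\<in>S. a \<bullet> u = 0}"
  have "0\<^sub>v n \<in> ?L" using assms(2) by auto
  moreover have "finite ?L" by (rule finite_subset[OF _ finite_carrier_vec]) auto
  ultimately have "card ?L > 0" by (intro card_gt_0_iff[THEN iffD2]) blast
  then show ?thesis using False by simp
qed

lemma card_left_kernel_ge:
  fixes A :: "'a::{finite,field} mat"
  shows "CARD('a) ^ (dim_row A - mat_rank A) \<le> card (left_kernel A)"
proof -
  interpret vec_space "TYPE('a)" "dim_row A" .
  obtain S where S: "S \<subseteq> set (cols A)" "card S = mat_rank A" "set (cols A) \<subseteq> span S"
    using exists_indpt_cols_spanning[of A "dim_col A"] unfolding mat_rank_def by auto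
  have SN: "S \<subseteq> carrier_vec (dim_row A)" "finite S"
    using S(1) cols_dim[of A] finite_subset[OF S(1)] by blast+
  have "{a \<in> carrier_vec (dim_row A). \<forall>u\<in>S. a \<bullet> u = 0} \<subseteq> left_kernel A"
  proof (intro subsetI)
    fix a assume a: "a \<in> {a \<in> carrier_vec (dim_row A). \<forall>u\<in>S. a \<bullet> u = 0}"
    have "a \<bullet> col A j = 0" if "j < dim_col A" for j
    proof (rule scalar_prod_eq_0_on_span[OF SN(1)])
      show "col A j \<in> span S" using S(3) that by (auto simp: cols_def)
    qed (use a in auto)
    then show "a \<in> left_kernel A" using a by (simp add: left_kernel_def)
  qed
  then have "card {a \<in> carrier_vec (dim_row A). \<forall>u\<in>S. a \<bullet> u = 0} \<le> card (left_kernel A)"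
    by (intro card_mono) (auto simp: left_kernel_def intro: finite_subset[OF _ finite_carrier_vec])
  then show ?thesis using card_annihilator_ge[OF SN(2,1)] S(2) by simp
qed

lemma sum_card_left_kernel_mono_power:
  fixes T n r :: nat
  shows "(\<Sum>X\<in>carrier_mat T n. card (left_kernel (mono_power (X :: 'a::{finite,field} mat) r))) =
    (\<Sum>a\<in>carrier_vec ((r + T) choose r). card {xs. length xs = T \<and> eval_coeff_poly T r (a :: 'a vec) xs = 0} ^ n)"
proof -
  let ?R = "\<lambda>X a. \<forall>j<n. eval_coeff_poly T r a (list_of_vec (col X j)) = (0::'a)"
  have "(\<Sum>X\<in>carrier_mat T n. card (left_kernel (mono_power (X :: 'a mat) r))) =
      (\<Sum>X\<in>carrier_mat T n. card {a \<in> carrier_vec ((r + T) choose r). ?R X a})"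
    by (rule sum.cong) (simp_all add: left_kernel_mono_power)
  also have "\<dots> = (\<Sum>a\<in>carrier_vec ((r + T) choose r). card {X \<in> carrier_mat T n. ?R X a})"
    using sum.swap_restrict[OF finite_carrier_mat[of T n] finite_carrier_vec[of "(r + T) choose r"],
        where g = "\<lambda>_ _. 1 :: nat" and R = ?R]
    by simp
  also have "\<dots> = (\<Sum>a\<in>carrier_vec ((r + T) choose r). card {xs. length xs = T \<and> eval_coeff_poly T r (a :: 'a vec) xs = 0} ^ n)"
  proof (rule sum.cong[OF refl])
    fix a :: "'a vec"
    show "card {X \<in> carrier_mat T n. ?R X a} = card {xs. length xs = T \<and> eval_coeff_poly T r a xs = 0} ^ n"
      using card_carrier_mat_cols[where P = "\<lambda>x. eval_coeff_poly T r a (list_of_vec x) = 0" and T = T and n = n]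
        card_carrier_vec_list_of_vec[where P = "\<lambda>xs. eval_coeff_poly T r a xs = 0" and T = T]
      by simp
  qed
  finally show ?thesis .
qed

lemma sum_power_le_remove:
  fixes f :: "'b \<Rightarrow> real" and A B :: real
  assumes "finite V" and "x\<^sub>0 \<in> V" and "\<And>x. x \<in> V \<Longrightarrow> 0 \<le> f x" and "f x\<^sub>0 \<le> A"
    and "\<And>x. x \<in> V \<Longrightarrow> x \<noteq> x\<^sub>0 \<Longrightarrow> f x \<le> B" and "0 \<le> B"
  shows "(\<Sum>x\<in>V. f x ^ n) \<le> A ^ n + real (card V) * B ^ n"
proof -
  have "(\<Sum>x\<in>V. f x ^ n) = f x\<^sub>0 ^ n + (\<Sum>x\<in>V - {x\<^sub>0}. f x ^ n)"
    using assms(1,2) by (rule sum.remove)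
  also have "\<dots> \<le> A ^ n + (\<Sum>x\<in>V - {x\<^sub>0}. B ^ n)"
    using assms(2-5) by (intro add_mono sum_mono power_mono) auto
  also have "\<dots> \<le> A ^ n + (\<Sum>x\<in>V. B ^ n)"
    using assms(1,6) by (intro add_left_mono sum_mono2) auto
  finally show ?thesis by simp
qed

lemma sum_card_left_kernel_mono_power_le:
  fixes T n r :: nat
  shows "real (\<Sum>X\<in>carrier_mat T n. card (left_kernel (mono_power (X :: 'a::{finite,field} mat) r)))
    \<le> real CARD('a) ^ (T * n) * (1 + real r ^ n * real CARD('a) ^ ((r + T) choose r) / real CARD('a) ^ n)"
proof -
  let ?q = "real CARD('a)" and ?N = "(r + T) choose r"
  define Z where "Z a = real (card {xs. length xs = T \<and> eval_coeff_poly T r a xs = (0::'a)})" for a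
  have Z_le: "Z a \<le> ?q ^ T" for a
  proof -
    have "card {xs. length xs = T \<and> eval_coeff_poly T r a xs = 0} \<le> card {xs :: 'a list. length xs = T}"
      by (intro card_mono finite_lists_length) auto
    then show ?thesis unfolding Z_def card_lists_length by (metis of_nat_le_iff of_nat_power)
  qed
  have Z_le_nonzero: "Z a \<le> real r * ?q ^ T / ?q" if "a \<in> carrier_vec ?N" "a \<noteq> 0\<^sub>v ?N" for a
  proof -
    have "Z a * ?q \<le> real r * ?q ^ T"
      using card_zeros_eval_coeff_poly[OF that] unfolding Z_def
      by (metis of_nat_le_iff of_nat_mult of_nat_power)
    then show ?thesis by (simp add: pos_le_divide_eq)
  qed
  have "real (\<Sum>X\<in>carrier_mat T n. card (left_kernel (mono_power (X :: 'a mat) r)))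
      = (\<Sum>a\<in>carrier_vec ?N. Z a ^ n)"
    unfolding Z_def sum_card_left_kernel_mono_power by simp
  also have "\<dots> \<le> (?q ^ T) ^ n + real (card (carrier_vec ?N :: 'a vec set)) * (real r * ?q ^ T / ?q) ^ n"
    using Z_le Z_le_nonzero by (intro sum_power_le_remove[where x\<^sub>0 = "0\<^sub>v ?N"]) (auto simp: Z_def)
  also have "\<dots> = ?q ^ (T * n) * (1 + real r ^ n * ?q ^ ?N / ?q ^ n)"
  proof -
    have "(real r * ?q ^ T / ?q) ^ n = real r ^ n * ?q ^ (T * n) / ?q ^ n"
      by (simp only: power_divide power_mult_distrib power_mult)
    then show ?thesis by (simp add: card_carrier_vec power_mult distrib_left mult_ac)
  qed
  finally show ?thesis .
qed

lemma two_le_card_field: "2 \<le> CARD('a::{finite,field})"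
proof -
  have "card {0 :: 'a, 1} = 2" by simp
  moreover have "card {0 :: 'a, 1} \<le> CARD('a)" by (rule card_mono) auto
  ultimately show ?thesis by simp
qed

lemma ln_le_divide_add_ln:
  fixes x c :: real
  assumes "0 < x" and "0 < c"
  shows "ln x \<le> x / c + ln c - 1"
proof -
  have "ln x = ln (x / c) + ln c" using assms by (simp add: ln_div)
  also have "ln (x / c) \<le> x / c - 1" using assms by (intro ln_le_minus_one) simp
  finally show ?thesis by simp
qed

lemma mean_ge_of_power_deficit_le:
  fixes rk :: "'b \<Rightarrow> nat" and L :: "'b \<Rightarrow> real" and N :: nat and Q c :: real
  assumes "finite S" and "S \<noteq> {}" and "1 < Q" and "1 \<le> c"
    and deficit: "\<And>x. x \<in> S \<Longrightarrow> Q ^ (N - rk x) \<le> L x"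
    and mean: "(\<Sum>x\<in>S. L x) \<le> card S * (1 + c)"
  shows "real N - (1 + ln c) / ln Q \<le> (\<Sum>x\<in>S. real (rk x)) / card S"
proof -
  define M where "M = real (card S)"
  have "M > 0" using assms(1,2) by (simp add: M_def card_gt_0_iff)
  have "ln Q > 0" using assms(3) by simp
  have pointwise: "(real N - real (rk x)) * ln Q \<le> L x / c + ln c - 1" if "x \<in> S" for x
  proof -
    have "0 < Q ^ (N - rk x)" using assms(3) by simp
    have "(real N - real (rk x)) * ln Q \<le> real (N - rk x) * ln Q"
      using \<open>ln Q > 0\<close> by (intro mult_right_mono) auto
    also have "\<dots> = ln (Q ^ (N - rk x))" using assms(3) by (simp add: ln_realpow)
    also have "\<dots> \<le> ln (L x)" using deficit[OF that] \<open>0 < Q ^ (N - rk x)\<close> by simp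
    also have "\<dots> \<le> L x / c + ln c - 1"
      using deficit[OF that] \<open>0 < Q ^ (N - rk x)\<close> assms(4) by (intro ln_le_divide_add_ln) auto
    finally show ?thesis .
  qed
  have "(M * real N - (\<Sum>x\<in>S. real (rk x))) * ln Q = (\<Sum>x\<in>S. (real N - real (rk x)) * ln Q)"
    by (simp add: M_def sum_subtractf sum_distrib_right left_diff_distrib)
  also have "\<dots> \<le> (\<Sum>x\<in>S. L x / c + ln c - 1)" using pointwise by (rule sum_mono)
  also have "\<dots> = (\<Sum>x\<in>S. L x) / c + M * (ln c - 1)"
    by (simp add: M_def sum.distrib sum_subtractf sum_divide_distrib right_diff_distrib)
  also have "\<dots> \<le> M * (1 + c) / c + M * (ln c - 1)"
    using mean assms(4) unfolding M_def by (intro add_right_mono divide_right_mono) auto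
  also have "\<dots> \<le> M * (1 + ln c)"
    using \<open>M > 0\<close> assms(4) by (simp add: field_simps)
  finally have "(M * real N - (\<Sum>x\<in>S. real (rk x))) * ln Q \<le> M * (1 + ln c)" .
  then show ?thesis
    using \<open>M > 0\<close> \<open>ln Q > 0\<close> unfolding M_def[symmetric] by (simp add: field_simps)
qed

theorem fact4p7:
  fixes T n r :: nat
  assumes "T > 0" and "n > 0" and "r > 0"
    and "real r ^ n * real CARD('a) powi (int ((r + T) choose r) - int n) \<ge> 1"
  shows "(\<Sum>X\<in>carrier_mat T n. real (mat_rank (mono_power (X :: 'a::{finite,field} mat) r)))
           / real (card (carrier_mat T n :: 'a mat set))
         \<ge> real n * (1 - ln (real r) / ln (real CARD('a))) - 1 / ln (real CARD('a))"
proof -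
  let ?q = "real CARD('a)" and ?N = "(r + T) choose r"
  define c where "c = real r ^ n * ?q ^ ?N / ?q ^ n"
  have "?q > 1" using two_le_card_field[where 'a = 'a] by simp
  have "c \<ge> 1" using assms(4) by (simp add: c_def power_int_diff)
  have ln_c: "ln c = real n * ln (real r) + (real ?N - real n) * ln ?q"
    using \<open>?q > 1\<close> assms(3) by (simp add: c_def ln_mult ln_div ln_realpow algebra_simps)
  have "real ?N - (1 + ln c) / ln ?q
      \<le> (\<Sum>X\<in>carrier_mat T n. real (mat_rank (mono_power (X :: 'a mat) r))) / card (carrier_mat T n :: 'a mat set)"
  proof (rule mean_ge_of_power_deficit_le[where L = "\<lambda>X. real (card (left_kernel (mono_power X r)))"])
    show "carrier_mat T n \<noteq> {}" using zero_carrier_mat by blast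
    show "?q ^ (?N - mat_rank (mono_power X r)) \<le> real (card (left_kernel (mono_power X r)))"
      if "X \<in> carrier_mat T n" for X :: "'a mat"
      using card_left_kernel_ge[of "mono_power X r"] mono_power_carrier_mat[OF that]
      by (metis carrier_matD(1) of_nat_le_iff of_nat_power)
    show "(\<Sum>X\<in>carrier_mat T n. real (card (left_kernel (mono_power (X :: 'a mat) r))))
        \<le> card (carrier_mat T n :: 'a mat set) * (1 + c)"
      using sum_card_left_kernel_mono_power_le[where T = T and n = n and r = r, where 'a = 'a]
      by (simp add: c_def card_carrier_mat)
  qed (use finite_carrier_mat \<open>?q > 1\<close> \<open>c \<ge> 1\<close> in auto)
  also have "real ?N - (1 + ln c) / ln ?q = real n * (1 - ln (real r) / ln ?q) - 1 / ln ?q"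
    using \<open>?q > 1\<close> unfolding ln_c by (simp add: field_simps)
  finally show ?thesis by simp
qed

end
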